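(* There are absolute constants $c>0$ and $C$ such that the following holds for all $n$. Let $f\colon\{0,1\}^n\to\{0,1\}$ be a uniformly random balanced function. Then with probability at least $1-2^{-2^{cn}}$ there exists a mapping $\phi$ from ${\sf Dictator}$ to $f$ such that $\Pr_{x}[{\sf dist}(x,\phi(x))\le 2]\ge 1-C/n$ for $x$ uniform in $\{0,1\}^n$. In particular, with this probability, ${\sf avgStretch}(\phi)\le C'$ and ${\sf avgStretch}(\phi^{-1})\le C'$ for an absolute constant $C'$.
   Context: A balanced function has exactly $2^{n-1}$ inputs mapped to $1$; a uniformly random balanced function is uniform among these. ${\sf Dictator}(x)=x_1$. A mapping from $g$ to $f$ is a bijection $\phi$ of $\{0,1\}^n$ with $g(z)=f(\phi(z))$ for all $z$. ${\sf avgStretch}(\phi)=\mathbb{E}_{x,i}[{\sf dist}(\phi(x),\phi(x+e_i))]$ with $x$ uniform in $\{0,1\}^n$, $i$ uniform in $[n]$, ${\sf dist}$ Hamming distance. *)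

theory Defs
  imports Complex_Main
begin

text \<open>Points of the cube {0,1}^n are encoded as subsets of {..<n} (the support).
  Coordinate i (0-based) of x is (i \<in> x); x + e_i is x with coordinate i flipped.\<close>

definition cube :: "nat \<Rightarrow> nat set set" where
  "cube n = Pow {..<n}"

definition flip :: "nat set \<Rightarrow> nat \<Rightarrow> nat set" where
  "flip x i = (if i \<in> x then x - {i} else insert i x)"

definition hdist :: "nat set \<Rightarrow> nat set \<Rightarrow> nat" where
  "hdist x y = card ((x - y) \<union> (y - x))"

text \<open>Boolean functions on the cube, normalised to be False outside the cube so that
  each function on {0,1}^n is represented exactly once.\<close>
definition balanced_funs :: "nat \<Rightarrow> (nat set \<Rightarrow> bool) set" where
  "balanced_funs n = {f. (\<forall>x. x \<notin> cube n \<longrightarrow> f x = False)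
                        \<and> card {x \<in> cube n. f x} = 2 ^ (n - 1)}"

text \<open>Dictator(x) = x_1, the first coordinate (index 0 here).\<close>
definition dictator :: "nat set \<Rightarrow> bool" where
  "dictator x = (0 \<in> x)"

definition is_mapping :: "nat \<Rightarrow> (nat set \<Rightarrow> bool) \<Rightarrow> (nat set \<Rightarrow> bool) \<Rightarrow> (nat set \<Rightarrow> nat set) \<Rightarrow> bool" where
  "is_mapping n g f \<phi> \<longleftrightarrow> bij_betw \<phi> (cube n) (cube n) \<and> (\<forall>z \<in> cube n. g z = f (\<phi> z))"

definition avgStretch :: "nat \<Rightarrow> (nat set \<Rightarrow> nat set) \<Rightarrow> real" where
  "avgStretch n \<phi> = (\<Sum>x\<in>cube n. \<Sum>i<n. real (hdist (\<phi> x) (\<phi> (flip x i)))) / (2 ^ n * real n)"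

definition unif_prob :: "'a set \<Rightarrow> ('a \<Rightarrow> bool) \<Rightarrow> real" where
  "unif_prob S P = real (card {s \<in> S. P s}) / real (card S)"

end

theory Submission
  imports Defs "HOL-Real_Asymp.Real_Asymp"
begin

text \<open>Split the cube into the edges \<open>{z, z \<union> {0}}\<close> of direction 0. On an edge where \<open>f\<close> is
  non-constant, \<open>\<phi>\<close> just orders the two ends. Edges on which \<open>f\<close> is constantly False must be paired
  with edges on which \<open>f\<close> is constantly True; balancedness makes both kinds equally numerous.
  Pairing them greedily along the directions \<open>1, \<dots>, k\<close>, a pair of neighbouring edges costs
  Hamming distance 2 only. An edge stays unpaired after \<open>k\<close> rounds with probability
  \<open>r(k) \<le> 1/(k+4)\<close>, where \<open>r(0) = 1/4\<close> and \<open>r(i+1) = r(i) (1 - r(i))\<close>, and the number of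
  unpaired edges is a sum of independent contributions of the blocks of points sharing the
  coordinates above \<open>k\<close>. For \<open>k = n/2\<close> an exponential moment bound shows that fewer than
  \<open>O(2^n/n)\<close> edges remain unpaired, except with probability \<open>2^(-2^(n/8))\<close> for a uniformly random
  function; a random balanced function is such a function conditioned on an event of probability
  at least \<open>2^(-n)\<close>. The remaining edges are paired arbitrarily. The resulting \<open>\<phi>\<close> is an
  involution, so it has the same stretch as its inverse.\<close>

section \<open>Averages over random Boolean functions\<close>

text \<open>\<open>avg_on D h\<close> is the expectation of \<open>h g\<close> for a uniformly random Boolean function \<open>g\<close> on the
  finite set \<open>D\<close>; functions of \<open>g\<close> depending only on disjoint sets are independent.\<close>

definition funs_on :: "'a set \<Rightarrow> ('a \<Rightarrow> bool) set" where
  "funs_on D = {g. \<forall>x. x \<notin> D \<longrightarrow> g x = False}"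

definition depends_only_on :: "'a set \<Rightarrow> (('a \<Rightarrow> bool) \<Rightarrow> 'b) \<Rightarrow> bool" where
  "depends_only_on D h \<longleftrightarrow> (\<forall>g g'. (\<forall>x\<in>D. g x = g' x) \<longrightarrow> h g = h g')"

definition avg_on :: "'a set \<Rightarrow> (('a \<Rightarrow> bool) \<Rightarrow> real) \<Rightarrow> real" where
  "avg_on D h = (\<Sum>g\<in>funs_on D. h g) / real (card (funs_on D))"

lemma bij_betw_funs_on_Pow: "bij_betw (\<lambda>S x. x \<in> S) (Pow D) (funs_on D)"
  unfolding bij_betw_def inj_on_def funs_on_def
proof (intro conjI ballI impI)
  fix S T assume "(\<lambda>x. x \<in> S) = (\<lambda>x. x \<in> T)"
  then show "S = T" by (metis Collect_mem_eq)
next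
  show "(\<lambda>S x. x \<in> S) ` Pow D = {g. \<forall>x. x \<notin> D \<longrightarrow> g x = False}"
  proof (rule set_eqI, rule iffI)
    fix g assume "g \<in> {g. \<forall>x. x \<notin> D \<longrightarrow> g x = False}"
    then have "g = (\<lambda>x. x \<in> {x. g x})" "{x. g x} \<in> Pow D" by auto
    then show "g \<in> (\<lambda>S x. x \<in> S) ` Pow D" by blast
  qed auto
qed

lemma card_funs_on: "finite D \<Longrightarrow> card (funs_on D) = 2 ^ card D"
  using bij_betw_same_card[OF bij_betw_funs_on_Pow[of D]] by (simp add: card_Pow)

lemma finite_funs_on: "finite D \<Longrightarrow> finite (funs_on D)"
  using bij_betw_finite[OF bij_betw_funs_on_Pow[of D]] by simp

lemma bij_betw_funs_on_Un:
  assumes "D1 \<inter> D2 = {}"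
  shows "bij_betw (\<lambda>g. (\<lambda>x. x \<in> D1 \<and> g x, \<lambda>x. x \<in> D2 \<and> g x))
           (funs_on (D1 \<union> D2)) (funs_on D1 \<times> funs_on D2)"
  unfolding bij_betw_def inj_on_def
proof (intro conjI ballI impI)
  fix g g' assume g: "g \<in> funs_on (D1 \<union> D2)" "g' \<in> funs_on (D1 \<union> D2)"
    and e: "(\<lambda>x. x \<in> D1 \<and> g x, \<lambda>x. x \<in> D2 \<and> g x) = (\<lambda>x. x \<in> D1 \<and> g' x, \<lambda>x. x \<in> D2 \<and> g' x)"
  show "g = g'"
  proof
    fix x
    from e have e1: "(\<lambda>x. x \<in> D1 \<and> g x) = (\<lambda>x. x \<in> D1 \<and> g' x)"
      and e2: "(\<lambda>x. x \<in> D2 \<and> g x) = (\<lambda>x. x \<in> D2 \<and> g' x)" by simp_all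
    have "(x \<in> D1 \<and> g x) = (x \<in> D1 \<and> g' x)" "(x \<in> D2 \<and> g x) = (x \<in> D2 \<and> g' x)"
      using fun_cong[OF e1, of x] fun_cong[OF e2, of x] by simp_all
    then show "g x = g' x" using g unfolding funs_on_def by (cases "x \<in> D1 \<union> D2") auto
  qed
next
  show "(\<lambda>g. (\<lambda>x. x \<in> D1 \<and> g x, \<lambda>x. x \<in> D2 \<and> g x)) ` funs_on (D1 \<union> D2) = funs_on D1 \<times> funs_on D2"
  proof (rule set_eqI, rule iffI)
    fix p assume p: "p \<in> funs_on D1 \<times> funs_on D2"
    obtain g1 g2 where pp: "p = (g1, g2)" by force
    define g where "g = (\<lambda>x. if x \<in> D1 then g1 x else g2 x)"
    have "g \<in> funs_on (D1 \<union> D2)" using p pp unfolding g_def funs_on_def by auto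
    moreover have "p = (\<lambda>x. x \<in> D1 \<and> g x, \<lambda>x. x \<in> D2 \<and> g x)"
      using p pp assms unfolding g_def funs_on_def by (auto intro!: ext)
    ultimately show "p \<in> (\<lambda>g. (\<lambda>x. x \<in> D1 \<and> g x, \<lambda>x. x \<in> D2 \<and> g x)) ` funs_on (D1 \<union> D2)"
      by blast
  qed (auto simp: funs_on_def)
qed

lemma sum_funs_on_Un_mult:
  fixes h1 h2 :: "('a \<Rightarrow> bool) \<Rightarrow> real"
  assumes "D1 \<inter> D2 = {}" "depends_only_on D1 h1" "depends_only_on D2 h2"
  shows "(\<Sum>g\<in>funs_on (D1 \<union> D2). h1 g * h2 g) = (\<Sum>g\<in>funs_on D1. h1 g) * (\<Sum>g\<in>funs_on D2. h2 g)"
proof -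
  let ?F = "\<lambda>g. (\<lambda>x. x \<in> D1 \<and> g x, \<lambda>x. x \<in> D2 \<and> g x)"
  have "(\<Sum>g\<in>funs_on D1. h1 g) * (\<Sum>g\<in>funs_on D2. h2 g)
      = (\<Sum>p\<in>funs_on D1 \<times> funs_on D2. h1 (fst p) * h2 (snd p))"
    by (simp add: sum_product sum.cartesian_product case_prod_beta)
  also have "\<dots> = (\<Sum>g\<in>funs_on (D1 \<union> D2). h1 (fst (?F g)) * h2 (snd (?F g)))"
    using sum.reindex_bij_betw[OF bij_betw_funs_on_Un[OF assms(1)], of "\<lambda>p. h1 (fst p) * h2 (snd p)"]
    by simp
  also have "\<dots> = (\<Sum>g\<in>funs_on (D1 \<union> D2). h1 g * h2 g)"
  proof (rule sum.cong[OF refl])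
    fix g
    have "h1 (fst (?F g)) = h1 g" "h2 (snd (?F g)) = h2 g"
      using assms(2,3) unfolding depends_only_on_def by simp_all
    then show "h1 (fst (?F g)) * h2 (snd (?F g)) = h1 g * h2 g" by simp
  qed
  finally show ?thesis by simp
qed

lemma avg_on_mult_disjoint:
  assumes "D1 \<inter> D2 = {}" "finite D1" "finite D2" "depends_only_on D1 h1" "depends_only_on D2 h2"
  shows "avg_on (D1 \<union> D2) (\<lambda>g. h1 g * h2 g) = avg_on D1 h1 * avg_on D2 h2"
proof -
  have "card (funs_on (D1 \<union> D2)) = card (funs_on D1) * card (funs_on D2)"
    using assms by (simp add: card_funs_on card_Un_disjoint power_add)
  then show ?thesis unfolding avg_on_def sum_funs_on_Un_mult[OF assms(1,4,5)] by simp
qed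

lemma avg_on_const: "finite D \<Longrightarrow> avg_on D (\<lambda>g. c) = c"
  by (simp add: avg_on_def card_funs_on)

lemma avg_on_superset:
  assumes "D \<subseteq> E" "finite E" "depends_only_on D h"
  shows "avg_on E h = avg_on D h"
proof -
  have "avg_on E h = avg_on (D \<union> (E - D)) (\<lambda>g. h g * 1)"
    using assms(1) by (simp add: Un_absorb1)
  also have "\<dots> = avg_on D h * avg_on (E - D) (\<lambda>g. 1)"
    using assms finite_subset by (intro avg_on_mult_disjoint) (auto simp: depends_only_on_def)
  finally show ?thesis using assms(2) by (simp add: avg_on_const)
qed

lemma avg_on_sum: "finite A \<Longrightarrow> avg_on D (\<lambda>g. \<Sum>a\<in>A. h a g) = (\<Sum>a\<in>A. avg_on D (h a))"
  unfolding avg_on_def by (simp add: sum.swap[of _ A] sum_divide_distrib)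

lemma avg_on_mono:
  "finite D \<Longrightarrow> (\<And>g. g \<in> funs_on D \<Longrightarrow> h g \<le> h' g) \<Longrightarrow> avg_on D h \<le> avg_on D h'"
  unfolding avg_on_def by (intro divide_right_mono sum_mono) auto

lemma avg_on_nonneg: "(\<And>g. 0 \<le> h g) \<Longrightarrow> 0 \<le> avg_on D h"
  unfolding avg_on_def by (intro divide_nonneg_nonneg sum_nonneg) auto

lemma avg_on_add: "avg_on D (\<lambda>g. h g + h' g) = avg_on D h + avg_on D h'"
  unfolding avg_on_def by (simp add: sum.distrib add_divide_distrib)

lemma avg_on_cmult: "avg_on D (\<lambda>g. c * h g) = c * avg_on D h"
  unfolding avg_on_def by (simp add: sum_distrib_left)

lemma avg_on_one_minus: "finite D \<Longrightarrow> avg_on D (\<lambda>g. 1 - h g) = 1 - avg_on D h"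
  using avg_on_add[of D "\<lambda>g. 1" "\<lambda>g. - h g"] avg_on_cmult[of D "-1" h] avg_on_const[of D 1]
  by simp

lemma funs_on_singleton: "funs_on {a} = {(\<lambda>x. False), (\<lambda>x. x = a)}"
proof (rule set_eqI, rule iffI)
  fix g assume "g \<in> funs_on {a}"
  then have "g = (\<lambda>x. x = a \<and> g a)" unfolding funs_on_def by (auto intro!: ext)
  then show "g \<in> {(\<lambda>x. False), (\<lambda>x. x = a)}" by (cases "g a") auto
qed (auto simp: funs_on_def)

lemma avg_on_singleton: "avg_on {a} (\<lambda>g. if g a = b then 1 else 0) = 1/2"
proof -
  have "(\<lambda>x. False) \<noteq> (\<lambda>x. x = a)" by (metis (full_types))
  then show ?thesis unfolding avg_on_def funs_on_singleton by (cases b) simp_all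
qed

lemma depends_only_on_mono: "depends_only_on D h \<Longrightarrow> D \<subseteq> E \<Longrightarrow> depends_only_on E h"
  unfolding depends_only_on_def by blast

lemma depends_only_on_comp: "depends_only_on D h \<Longrightarrow> depends_only_on D (\<lambda>g. F (h g))"
  unfolding depends_only_on_def by presburger

lemma depends_only_on_sum:
  "(\<And>a. a \<in> A \<Longrightarrow> depends_only_on D (h a)) \<Longrightarrow> depends_only_on D (\<lambda>g. \<Sum>a\<in>A. h a g)"
  unfolding depends_only_on_def by (auto intro!: sum.cong)

lemma depends_only_on_prod:
  "(\<And>a. a \<in> A \<Longrightarrow> depends_only_on D (h a)) \<Longrightarrow> depends_only_on D (\<lambda>g. \<Prod>a\<in>A. h a g)"
  unfolding depends_only_on_def by (auto intro!: prod.cong)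

lemma avg_on_prod_disjoint:
  fixes h :: "'b \<Rightarrow> ('a \<Rightarrow> bool) \<Rightarrow> real"
  assumes "finite Y" "\<And>y. y \<in> Y \<Longrightarrow> finite (E y)" "\<And>y. y \<in> Y \<Longrightarrow> depends_only_on (E y) (h y)"
    "\<And>y y'. y \<in> Y \<Longrightarrow> y' \<in> Y \<Longrightarrow> y \<noteq> y' \<Longrightarrow> E y \<inter> E y' = {}"
  shows "avg_on (\<Union>y\<in>Y. E y) (\<lambda>g. \<Prod>y\<in>Y. h y g) = (\<Prod>y\<in>Y. avg_on (E y) (h y))"
  using assms
proof (induction Y rule: finite_induct)
  case empty
  then show ?case by (simp add: avg_on_const)
next
  case (insert y Y)
  have "avg_on (E y \<union> (\<Union>y\<in>Y. E y)) (\<lambda>g. h y g * (\<Prod>y\<in>Y. h y g))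
      = avg_on (E y) (h y) * avg_on (\<Union>y\<in>Y. E y) (\<lambda>g. \<Prod>y\<in>Y. h y g)"
  proof (rule avg_on_mult_disjoint)
    show "E y \<inter> (\<Union>y\<in>Y. E y) = {}" using insert.prems(3) insert.hyps(2) by blast
    show "depends_only_on (\<Union>y\<in>Y. E y) (\<lambda>g. \<Prod>y\<in>Y. h y g)"
      using insert by (intro depends_only_on_prod) (auto intro: depends_only_on_mono)
  qed (use insert in auto)
  then show ?case using insert by simp
qed

lemma card_exp_ge_le_avg_on:
  assumes "finite D"
  shows "real (card {g \<in> funs_on D. T \<le> h g}) * exp T \<le> real (card (funs_on D)) * avg_on D (\<lambda>g. exp (h g))"
proof -
  have "real (card {g \<in> funs_on D. T \<le> h g}) * exp T = (\<Sum>g\<in>{g \<in> funs_on D. T \<le> h g}. exp T)"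
    by simp
  also have "\<dots> \<le> (\<Sum>g\<in>{g \<in> funs_on D. T \<le> h g}. exp (h g))"
    by (rule sum_mono) simp
  also have "\<dots> \<le> (\<Sum>g\<in>funs_on D. exp (h g))"
    by (rule sum_mono2[OF finite_funs_on[OF assms]]) auto
  also have "\<dots> = real (card (funs_on D)) * avg_on D (\<lambda>g. exp (h g))"
    unfolding avg_on_def using assms by (simp add: card_funs_on)
  finally show ?thesis .
qed

lemma unif_prob_ge_one_minus_card:
  assumes "card A > 0" "B \<subseteq> A" "\<And>a. a \<in> A - B \<Longrightarrow> P a"
  shows "unif_prob A P \<ge> 1 - real (card B) / real (card A)"
proof -
  have A: "finite A" using assms(1) card_ge_0_finite by blast
  have "card (A - B) \<le> card {a \<in> A. P a}"
    using A assms by (intro card_mono) auto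
  moreover have "card (A - B) = card A - card B" "card B \<le> card A"
    using A assms by (auto intro: card_Diff_subset finite_subset card_mono)
  ultimately have "real (card A) - real (card B) \<le> real (card {a \<in> A. P a})" by linarith
  then have "(real (card A) - real (card B)) / real (card A) \<le> real (card {a \<in> A. P a}) / real (card A)"
    by (intro divide_right_mono) auto
  then show ?thesis unfolding unif_prob_def using assms(1) by (simp add: diff_divide_distrib)
qed

lemma finite_cube: "finite (cube n)"
  unfolding cube_def by simp

lemma card_cube: "card (cube n) = 2 ^ n"
  unfolding cube_def by (simp add: card_Pow)

lemma finite_of_mem_cube: "x \<in> cube n \<Longrightarrow> finite x"
  unfolding cube_def by (auto intro: finite_subset)

lemma mem_flip: "j \<in> flip z i \<longleftrightarrow> (if j = i then j \<notin> z else j \<in> z)"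
  unfolding flip_def by auto

lemma flip_flip [simp]: "flip (flip z j) j = z"
  unfolding flip_def by auto

lemma flip_in_cube: "x \<in> cube n \<Longrightarrow> i < n \<Longrightarrow> flip x i \<in> cube n"
  unfolding cube_def flip_def by auto

lemma bij_betw_flip: "i < n \<Longrightarrow> bij_betw (\<lambda>x. flip x i) (cube n) (cube n)"
  by (rule bij_betw_byWitness[where f'="\<lambda>x. flip x i"]) (auto simp: flip_in_cube)

lemma hdist_self [simp]: "hdist x x = 0"
  unfolding hdist_def by simp

lemma hdist_commute: "hdist x y = hdist y x"
  unfolding hdist_def by (simp add: Un_commute)

lemma hdist_flip: "hdist z (flip z j) = 1"
proof -
  have "(z - flip z j) \<union> (flip z j - z) = {j}" unfolding flip_def by auto
  then show ?thesis unfolding hdist_def by simp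
qed

lemma hdist_insert_0: "0 \<notin> z \<Longrightarrow> hdist (insert 0 z) z = 1"
proof -
  assume "0 \<notin> z"
  then have "(insert 0 z - z) \<union> (z - insert 0 z) = {0}" by auto
  then show ?thesis unfolding hdist_def by simp
qed

lemma hdist_insert_0_flip: "0 \<notin> z \<Longrightarrow> j \<noteq> 0 \<Longrightarrow> hdist (insert 0 z) (flip z j) = 2"
proof -
  assume "0 \<notin> z" "j \<noteq> 0"
  then have "(insert 0 z - flip z j) \<union> (flip z j - insert 0 z) = {0, j}" unfolding flip_def by auto
  then show ?thesis unfolding hdist_def using \<open>j \<noteq> 0\<close> by simp
qed

lemma hdist_triangle:
  assumes "finite x" "finite y" "finite z"
  shows "hdist x z \<le> hdist x y + hdist y z"
proof -
  have "card ((x - z) \<union> (z - x)) \<le> card (((x - y) \<union> (y - x)) \<union> ((y - z) \<union> (z - y)))"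
    using assms by (intro card_mono) auto
  also have "\<dots> \<le> card ((x - y) \<union> (y - x)) + card ((y - z) \<union> (z - y))" by (rule card_Un_le)
  finally show ?thesis unfolding hdist_def .
qed

lemma hdist_le_dim: "x \<in> cube n \<Longrightarrow> y \<in> cube n \<Longrightarrow> hdist x y \<le> n"
  unfolding hdist_def cube_def using card_mono[of "{..<n}" "(x - y) \<union> (y - x)"] by auto

definition bottom :: "nat \<Rightarrow> nat set set" where
  "bottom n = {z. z \<subseteq> {..<n} \<and> 0 \<notin> z}"

lemma finite_bottom: "finite (bottom n)"
  unfolding bottom_def by simp

lemma card_bottom: "n \<ge> 1 \<Longrightarrow> card (bottom n) = 2 ^ (n - 1)"
proof -
  have "bottom n = Pow ({..<n} - {0})" unfolding bottom_def by auto
  moreover assume "n \<ge> 1"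
  ultimately show ?thesis by (simp add: card_Pow)
qed

lemma zero_notin_bottom: "z \<in> bottom n \<Longrightarrow> 0 \<notin> z"
  unfolding bottom_def by auto

lemma bottom_subset_cube: "bottom n \<subseteq> cube n"
  unfolding bottom_def cube_def by auto

lemma insert_0_bottom_in_cube: "z \<in> bottom n \<Longrightarrow> n \<ge> 1 \<Longrightarrow> insert 0 z \<in> cube n"
  unfolding bottom_def cube_def by auto

lemma flip_in_bottom: "z \<in> bottom n \<Longrightarrow> 1 \<le> j \<Longrightarrow> j < n \<Longrightarrow> flip z j \<in> bottom n"
  unfolding bottom_def flip_def by auto

lemma cube_eq_bottom_Un: "n \<ge> 1 \<Longrightarrow> cube n = bottom n \<union> insert 0 ` bottom n"
proof (rule set_eqI, rule iffI)
  fix x assume "x \<in> cube n"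
  then have "0 \<notin> x \<Longrightarrow> x \<in> bottom n" "0 \<in> x \<Longrightarrow> x = insert 0 (x - {0}) \<and> x - {0} \<in> bottom n"
    unfolding bottom_def cube_def by auto
  then show "x \<in> bottom n \<union> insert 0 ` bottom n" by blast
qed (auto simp: bottom_def cube_def)

lemma bottom_disjoint_top: "bottom n \<inter> insert 0 ` bottom n = {}"
  unfolding bottom_def by auto

lemma inj_on_insert_0_bottom: "inj_on (insert 0) (bottom n)"
proof (rule inj_onI)
  fix x y assume "x \<in> bottom n" "y \<in> bottom n" "insert 0 x = insert 0 y"
  then have "insert 0 x - {0} = insert 0 y - {0}" "0 \<notin> x" "0 \<notin> y" unfolding bottom_def by auto
  then show "x = y" by simp
qed

section \<open>Greedy matching of monochromatic edges\<close>

text \<open>In round \<open>i + 1\<close> of the greedy matching, two edges that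
  are neighbours in direction \<open>i + 1\<close>, are still unmatched and have the types 1 and 2 are matched.
  \<open>state i g z\<close> is the type of the edge at \<open>z\<close> if it is unmatched after \<open>i\<close> rounds and 0 otherwise;
  \<open>partner i g z\<close> is the edge it has been matched with.\<close>

definition edge_type :: "(nat set \<Rightarrow> bool) \<Rightarrow> nat set \<Rightarrow> nat" where
  "edge_type g z = (if \<not> g (insert 0 z) \<and> \<not> g z then 1 else if g (insert 0 z) \<and> g z then 2 else 0)"

lemma edge_type_0_iff: "edge_type g z = 0 \<longleftrightarrow> (g (insert 0 z) \<longleftrightarrow> \<not> g z)"
  and edge_type_1_iff: "edge_type g z = 1 \<longleftrightarrow> \<not> g (insert 0 z) \<and> \<not> g z"
  and edge_type_2_iff: "edge_type g z = 2 \<longleftrightarrow> g (insert 0 z) \<and> g z"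
  by (auto simp: edge_type_def)

lemma edge_type_cases: "edge_type g z = 0 \<or> edge_type g z = 1 \<or> edge_type g z = 2"
  by (auto simp: edge_type_def)

fun state :: "nat \<Rightarrow> (nat set \<Rightarrow> bool) \<Rightarrow> nat set \<Rightarrow> nat" where
  "state 0 g z = edge_type g z"
| "state (Suc i) g z = (if state i g z + state i g (flip z (Suc i)) = 3 then 0 else state i g z)"

fun partner :: "nat \<Rightarrow> (nat set \<Rightarrow> bool) \<Rightarrow> nat set \<Rightarrow> nat set" where
  "partner 0 g z = z"
| "partner (Suc i) g z =
     (if state i g z + state i g (flip z (Suc i)) = 3 then flip z (Suc i) else partner i g z)"

fun state_support :: "nat \<Rightarrow> nat set \<Rightarrow> nat set set" where
  "state_support 0 z = {z, insert 0 z}"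
| "state_support (Suc i) z = state_support i z \<union> state_support i (flip z (Suc i))"

fun unmatched_prob :: "nat \<Rightarrow> real" where
  "unmatched_prob 0 = 1/4"
| "unmatched_prob (Suc i) = unmatched_prob i * (1 - unmatched_prob i)"

lemma state_le_2: "state i g z \<le> 2"
  by (induction i arbitrary: z) (auto simp: edge_type_def)

lemma state_Suc_eq:
  assumes "c \<in> {1, 2}"
  shows "state (Suc i) g z = c \<longleftrightarrow> state i g z = c \<and> state i g (flip z (Suc i)) \<noteq> 3 - c"
  using assms state_le_2[of i g z] state_le_2[of i g "flip z (Suc i)"] by auto

lemma depends_only_on_state: "depends_only_on (state_support i z) (\<lambda>g. state i g z)"
proof (induction i arbitrary: z)
  case 0
  show ?case unfolding depends_only_on_def by (auto simp: edge_type_def)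
next
  case (Suc i)
  show ?case unfolding depends_only_on_def
  proof (intro allI impI)
    fix g g' :: "nat set \<Rightarrow> bool" assume "\<forall>x\<in>state_support (Suc i) z. g x = g' x"
    then have "state i g z = state i g' z" "state i g (flip z (Suc i)) = state i g' (flip z (Suc i))"
      using Suc.IH unfolding depends_only_on_def by (metis UnCI state_support.simps(2))+
    then show "state (Suc i) g z = state (Suc i) g' z" by simp
  qed
qed

lemma state_support_coord: "w \<in> state_support i z \<Longrightarrow> i < j \<Longrightarrow> j \<in> w \<longleftrightarrow> j \<in> z"
proof (induction i arbitrary: z)
  case 0
  then show ?case by auto
next
  case (Suc i)
  then consider "w \<in> state_support i z" | "w \<in> state_support i (flip z (Suc i))" by auto
  then show ?case
  proof cases
    case 1
    then show ?thesis using Suc.IH Suc.prems(2) by simp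
  next
    case 2
    then show ?thesis using Suc.IH[of "flip z (Suc i)"] Suc.prems(2) by (simp add: mem_flip)
  qed
qed

lemma state_support_disjoint: "state_support i z \<inter> state_support i (flip z (Suc i)) = {}"
  using state_support_coord[of _ i z "Suc i"] state_support_coord[of _ i "flip z (Suc i)" "Suc i"]
  by (auto simp: mem_flip)

lemma finite_state_support: "finite (state_support i z)"
  by (induction i arbitrary: z) auto

lemma state_support_subset_cube: "z \<subseteq> {..<n} \<Longrightarrow> i < n \<Longrightarrow> state_support i z \<subseteq> cube n"
proof (induction i arbitrary: z)
  case 0
  then show ?case by (auto simp: cube_def)
next
  case (Suc i)
  moreover have "flip z (Suc i) \<subseteq> {..<n}" using Suc.prems unfolding flip_def by auto
  ultimately show ?case by auto
qed

text \<open>The states of the two edges compared in a round depend on disjoint parts of \<open>g\<close>, so they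
  are independent; this gives the recursion defining \<open>unmatched_prob\<close>.\<close>

lemma avg_on_state_eq:
  assumes "c \<in> {1, 2}" "0 \<notin> z"
  shows "avg_on (state_support i z) (\<lambda>g. if state i g z = c then 1 else 0) = unmatched_prob i"
  using assms
proof (induction i arbitrary: z c)
  case 0
  let ?b = "c = 2"
  have "avg_on (state_support 0 z) (\<lambda>g. if state 0 g z = c then 1 else 0)
      = avg_on ({insert 0 z} \<union> {z})
          (\<lambda>g. (if g (insert 0 z) = ?b then 1 else 0) * (if g z = ?b then 1 else 0))"
    using 0 by (intro arg_cong2[where f=avg_on] ext) (auto simp: edge_type_def)
  also have "\<dots> = 1/4"
    using 0 by (subst avg_on_mult_disjoint) (auto simp: depends_only_on_def avg_on_singleton)
  finally show ?case by simp
next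
  case (Suc i)
  let ?z = "flip z (Suc i)"
  have IH: "avg_on (state_support i z) (\<lambda>g. if state i g z = c then 1 else 0) = unmatched_prob i"
    "avg_on (state_support i ?z) (\<lambda>g. if state i g ?z = 3 - c then 1 else 0) = unmatched_prob i"
    using Suc by (auto simp: mem_flip intro!: Suc.IH)
  have "avg_on (state_support (Suc i) z) (\<lambda>g. if state (Suc i) g z = c then 1 else 0)
     = avg_on (state_support i z \<union> state_support i ?z)
         (\<lambda>g. (if state i g z = c then 1 else 0) * (1 - (if state i g ?z = 3 - c then 1 else 0)))"
    using state_Suc_eq[OF Suc.prems(1)]
    by (intro arg_cong2[where f=avg_on] ext) (simp_all del: state.simps)
  also have "\<dots> = unmatched_prob i * (1 - unmatched_prob i)"
    by (subst avg_on_mult_disjoint[OF state_support_disjoint finite_state_support finite_state_support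
          depends_only_on_comp[OF depends_only_on_state] depends_only_on_comp[OF depends_only_on_state]])
       (simp only: avg_on_one_minus[OF finite_state_support] IH)
  finally show ?case by simp
qed

lemma unmatched_prob_bounds: "0 \<le> unmatched_prob i \<and> unmatched_prob i \<le> 1 / (real i + 4)"
proof (induction i)
  case 0
  then show ?case by simp
next
  case (Suc i)
  let ?a = "1 / (real i + 4)"
  have a: "?a \<le> 1/4" by (simp add: field_simps)
  \<comment> \<open>\<open>t \<mapsto> t (1 - t)\<close> is increasing on \<open>[0, 1/2]\<close>\<close>
  have "unmatched_prob i * (1 - unmatched_prob i) \<le> ?a * (1 - ?a)"
  proof -
    have "?a * (1 - ?a) - unmatched_prob i * (1 - unmatched_prob i)
        = (?a - unmatched_prob i) * (1 - ?a - unmatched_prob i)"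
      by (simp add: algebra_simps)
    also have "\<dots> \<ge> 0" using Suc a by (intro mult_nonneg_nonneg) linarith+
    finally show ?thesis by simp
  qed
  also have "?a * (1 - ?a) \<le> 1 / (real (Suc i) + 4)"
  proof -
    have "0 < real i * real i + (16 + real i * 8)"
      using zero_le_square[of "real i"] by linarith
    then show ?thesis by (simp add: field_simps)
  qed
  finally have "unmatched_prob i * (1 - unmatched_prob i) \<le> 1 / (real (Suc i) + 4)" .
  moreover have "0 \<le> unmatched_prob i * (1 - unmatched_prob i)"
    using Suc a by (intro mult_nonneg_nonneg) linarith+
  ultimately show ?case by simp
qed

lemma state_nonzero: "state i g z \<noteq> 0 \<Longrightarrow> state i g z = edge_type g z \<and> partner i g z = z"
proof (induction i arbitrary: z)
  case (Suc i)
  then have "state i g z + state i g (flip z (Suc i)) \<noteq> 3" "state i g z \<noteq> 0"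
    by (auto split: if_splits)
  then show ?case using Suc.IH[of z] by simp
qed simp

lemma partner_of_matched:
  assumes "edge_type g z \<noteq> 0" "state i g z = 0"
  shows "edge_type g (partner i g z) + edge_type g z = 3 \<and> state i g (partner i g z) = 0
    \<and> partner i g (partner i g z) = z \<and> (\<exists>j. 1 \<le> j \<and> j \<le> i \<and> partner i g z = flip z j)"
  using assms
proof (induction i arbitrary: z)
  case 0
  then show ?case by simp
next
  case (Suc i)
  let ?z = "flip z (Suc i)"
  show ?case
  proof (cases "state i g z + state i g ?z = 3")
    case True
    then have "state i g z \<noteq> 0" "state i g ?z \<noteq> 0"
      using state_le_2[of i g z] state_le_2[of i g ?z] by auto
    then have "edge_type g ?z + edge_type g z = 3"
      using state_nonzero[of i g z] state_nonzero[of i g ?z] True by simp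
    moreover have "state i g ?z + state i g (flip ?z (Suc i)) = 3" using True by simp
    ultimately show ?thesis using True by auto
  next
    case False
    then have "state i g z = 0" using Suc.prems(2) by (auto split: if_splits)
    note IH = Suc.IH[OF Suc.prems(1) this]
    have "state i g (partner i g z) + state i g (flip (partner i g z) (Suc i)) \<noteq> 3"
      using IH state_le_2[of i g "flip (partner i g z) (Suc i)"] by auto
    then show ?thesis using IH False by (auto intro: le_SucI)
  qed
qed

definition edges_of_type :: "nat \<Rightarrow> (nat set \<Rightarrow> bool) \<Rightarrow> nat \<Rightarrow> nat set set" where
  "edges_of_type n g c = {z \<in> bottom n. edge_type g z = c}"

definition unmatched :: "nat \<Rightarrow> nat \<Rightarrow> (nat set \<Rightarrow> bool) \<Rightarrow> nat \<Rightarrow> nat set set" where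
  "unmatched n k g c = {z \<in> bottom n. state k g z = c}"

lemma finite_unmatched: "finite (unmatched n k g c)"
  unfolding unmatched_def using finite_bottom by simp

lemma unmatched_subset: "c \<noteq> 0 \<Longrightarrow> unmatched n k g c \<subseteq> edges_of_type n g c"
  unfolding unmatched_def edges_of_type_def using state_nonzero[of k g] by force

lemma unmatched_D:
  "z \<in> unmatched n k g c \<Longrightarrow> c \<noteq> 0 \<Longrightarrow> z \<in> bottom n \<and> edge_type g z = c \<and> state k g z = c"
  using unmatched_subset[of c n k g] unfolding edges_of_type_def unmatched_def by auto

lemma partner_props:
  assumes "z \<in> bottom n" "edge_type g z \<noteq> 0" "state k g z = 0" "k < n"
  shows "partner k g z \<in> bottom n" "edge_type g (partner k g z) + edge_type g z = 3"
    "state k g (partner k g z) = 0" "partner k g (partner k g z) = z"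
    "hdist (insert 0 z) (partner k g z) = 2" "hdist z (insert 0 (partner k g z)) = 2"
proof -
  note matched = partner_of_matched[OF assms(2,3)]
  then obtain j where j: "1 \<le> j" "j \<le> k" "partner k g z = flip z j" by blast
  show "partner k g z \<in> bottom n" using j flip_in_bottom[OF assms(1)] assms(4) by simp
  show "edge_type g (partner k g z) + edge_type g z = 3" "state k g (partner k g z) = 0"
    "partner k g (partner k g z) = z" using matched by auto
  have z0: "0 \<notin> z" using zero_notin_bottom[OF assms(1)] .
  show "hdist (insert 0 z) (partner k g z) = 2" using j hdist_insert_0_flip[OF z0, of j] by simp
  have "0 \<notin> flip z j" using z0 j by (simp add: mem_flip)
  then have "hdist (insert 0 (flip z j)) (flip (flip z j) j) = 2" using j by (intro hdist_insert_0_flip) auto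
  then show "hdist z (insert 0 (partner k g z)) = 2" using j(3) hdist_commute by (metis flip_flip)
qed

lemma bij_betw_partner:
  assumes "k < n"
  shows "bij_betw (partner k g) (edges_of_type n g 1 - unmatched n k g 1)
           (edges_of_type n g 2 - unmatched n k g 2)"
proof (rule bij_betw_byWitness[where f'="partner k g"])
  have props: "partner k g z \<in> bottom n \<and> edge_type g (partner k g z) + edge_type g z = 3
      \<and> state k g (partner k g z) = 0 \<and> partner k g (partner k g z) = z"
    if "z \<in> edges_of_type n g c - unmatched n k g c" "c \<noteq> 0" for z c
  proof -
    have "state k g z = 0" using that state_nonzero[of k g z]
      unfolding edges_of_type_def unmatched_def by auto
    then show ?thesis using that partner_props[OF _ _ _ assms] unfolding edges_of_type_def by auto
  qed
  show "\<forall>z\<in>edges_of_type n g 1 - unmatched n k g 1. partner k g (partner k g z) = z"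
    "\<forall>z\<in>edges_of_type n g 2 - unmatched n k g 2. partner k g (partner k g z) = z"
    using props by auto
  show "partner k g ` (edges_of_type n g 1 - unmatched n k g 1) \<subseteq> edges_of_type n g 2 - unmatched n k g 2"
    "partner k g ` (edges_of_type n g 2 - unmatched n k g 2) \<subseteq> edges_of_type n g 1 - unmatched n k g 1"
    using props[of _ 1] props[of _ 2] unfolding edges_of_type_def unmatched_def by fastforce+
qed

lemma card_true_eq_edges_of_type:
  assumes "n \<ge> 1"
  shows "int (card {x \<in> cube n. g x})
    = int (card (bottom n)) + int (card (edges_of_type n g 2)) - int (card (edges_of_type n g 1))"
proof -
  have "{x \<in> cube n. g x} = cube n \<inter> Collect g" by auto
  then have "int (card {x \<in> cube n. g x}) = (\<Sum>x\<in>cube n. if g x then 1 else 0)"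
    by (simp add: sum.If_cases finite_cube)
  also have "\<dots> = (\<Sum>x\<in>bottom n. if g x then 1 else 0) + (\<Sum>x\<in>insert 0 ` bottom n. if g x then 1 else 0)"
    unfolding cube_eq_bottom_Un[OF assms]
    by (rule sum.union_disjoint) (use finite_bottom bottom_disjoint_top in auto)
  also have "(\<Sum>x\<in>insert 0 ` bottom n. if g x then 1 else 0)
      = (\<Sum>z\<in>bottom n. if g (insert 0 z) then 1 else (0::int))"
    by (rule sum.reindex[OF inj_on_insert_0_bottom, unfolded comp_def])
  also have "(\<Sum>x\<in>bottom n. if g x then 1 else 0) + \<dots>
      = (\<Sum>z\<in>bottom n. 1 + (if edge_type g z = 2 then 1 else 0) - (if edge_type g z = 1 then 1 else 0))"
    unfolding sum.distrib[symmetric] by (rule sum.cong) (auto simp: edge_type_def)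
  also have "\<dots> = int (card (bottom n)) + int (card (edges_of_type n g 2)) - int (card (edges_of_type n g 1))"
    unfolding edges_of_type_def by (simp add: sum.distrib sum_subtractf sum.If_cases finite_bottom Int_def)
  finally show ?thesis .
qed

lemma card_unmatched_1_eq_2:
  assumes "n \<ge> 1" "k < n" "card {x \<in> cube n. g x} = 2 ^ (n - 1)"
  shows "card (unmatched n k g 1) = card (unmatched n k g 2)"
proof -
  have fin: "finite (edges_of_type n g c)" for c
    unfolding edges_of_type_def using finite_bottom by simp
  have "card (edges_of_type n g 1) = card (edges_of_type n g 2)"
    using card_true_eq_edges_of_type[OF assms(1), of g] assms(3) card_bottom[OF assms(1)] by simp
  moreover have "card (edges_of_type n g 1 - unmatched n k g 1) = card (edges_of_type n g 2 - unmatched n k g 2)"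
    by (rule bij_betw_same_card[OF bij_betw_partner[OF assms(2)]])
  moreover have "card (edges_of_type n g c - unmatched n k g c)
      = card (edges_of_type n g c) - card (unmatched n k g c)
    \<and> card (unmatched n k g c) \<le> card (edges_of_type n g c)" if "c \<noteq> 0" for c
    using card_Diff_subset[OF finite_unmatched unmatched_subset[OF that]]
      card_mono[OF fin unmatched_subset[OF that]] by simp
  ultimately show ?thesis by (metis diff_diff_cancel one_neq_zero zero_neq_numeral)
qed

text \<open>The top end of a False edge is sent to the bottom end of the True edge it is matched with
  (through \<open>\<sigma>\<close> if it is still unmatched after \<open>k\<close> rounds), and the bottom end of a True edge to the
  top end of its partner; all other points stay on their own edge.\<close>

definition dictator_map ::
    "nat \<Rightarrow> nat \<Rightarrow> (nat set \<Rightarrow> bool) \<Rightarrow> (nat set \<Rightarrow> nat set) \<Rightarrow> nat set \<Rightarrow> nat set" where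
  "dictator_map n k g \<sigma> x = (if 0 \<in> x then
     (if edge_type g (x - {0}) = 0 then (if g x then x else x - {0})
      else if edge_type g (x - {0}) = 1 then
        (if state k g (x - {0}) = 1 then \<sigma> (x - {0}) else partner k g (x - {0}))
      else x)
   else
     (if edge_type g x = 0 then (if g x then insert 0 x else x)
      else if edge_type g x = 1 then x
      else insert 0 (if state k g x = 2 then inv_into (unmatched n k g 1) \<sigma> x else partner k g x)))"

locale dictator_matching =
  fixes n k :: nat and g :: "nat set \<Rightarrow> bool" and \<sigma> :: "nat set \<Rightarrow> nat set"
  assumes n_ge_1: "n \<ge> 1" and k_less_n: "k < n"
    and bij_\<sigma>: "bij_betw \<sigma> (unmatched n k g 1) (unmatched n k g 2)"
begin

abbreviation \<phi> :: "nat set \<Rightarrow> nat set" where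
  "\<phi> \<equiv> dictator_map n k g \<sigma>"

definition far_points :: "nat set set" where
  "far_points = insert 0 ` unmatched n k g 1 \<union> unmatched n k g 2"

definition mapped_correctly :: "nat set \<Rightarrow> bool" where
  "mapped_correctly x \<longleftrightarrow> \<phi> x \<in> cube n \<and> \<phi> (\<phi> x) = x \<and> g (\<phi> x) = dictator x
     \<and> (x \<notin> far_points \<longrightarrow> hdist x (\<phi> x) \<le> 2)"

lemma dictator_map_top:
  assumes "z \<in> bottom n"
  shows "\<phi> (insert 0 z) = (if edge_type g z = 0 then (if g (insert 0 z) then insert 0 z else z)
      else if edge_type g z = 1 then (if state k g z = 1 then \<sigma> z else partner k g z)
      else insert 0 z)"
  using zero_notin_bottom[OF assms] unfolding dictator_map_def by simp

lemma dictator_map_bottom: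
  assumes "z \<in> bottom n"
  shows "\<phi> z = (if edge_type g z = 0 then (if g z then insert 0 z else z)
      else if edge_type g z = 1 then z
      else insert 0 (if state k g z = 2 then inv_into (unmatched n k g 1) \<sigma> z else partner k g z))"
  using zero_notin_bottom[OF assms] unfolding dictator_map_def by simp

lemma mapped_correctly_type_0:
  assumes z: "z \<in> bottom n" and t: "edge_type g z = 0" and x: "x \<in> {z, insert 0 z}"
  shows "mapped_correctly x"
proof -
  have z0: "0 \<notin> z" using zero_notin_bottom[OF z] .
  have in_cube: "z \<in> cube n" "insert 0 z \<in> cube n"
    using bottom_subset_cube z insert_0_bottom_in_cube[OF z n_ge_1] by auto
  have d: "hdist (insert 0 z) z = 1" "hdist z (insert 0 z) = 1"
    using hdist_insert_0[OF z0] hdist_commute by metis+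
  have g: "g (insert 0 z) \<longleftrightarrow> \<not> g z" using t by (simp add: edge_type_0_iff)
  consider "\<phi> z = insert 0 z" "\<phi> (insert 0 z) = z" "g z" "\<not> g (insert 0 z)"
    | "\<phi> z = z" "\<phi> (insert 0 z) = insert 0 z" "\<not> g z" "g (insert 0 z)"
    using dictator_map_top[OF z] dictator_map_bottom[OF z] t g by (cases "g z") auto
  then show ?thesis
    using x in_cube d z0 unfolding mapped_correctly_def dictator_def by cases auto
qed

lemma top_of_false_edge:
  assumes z: "z \<in> bottom n" and t: "edge_type g z = 1"
  obtains w where "w \<in> bottom n" "edge_type g w = 2" "\<phi> (insert 0 z) = w" "\<phi> w = insert 0 z"
    "z \<notin> unmatched n k g 1 \<Longrightarrow> hdist (insert 0 z) w \<le> 2"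
proof (cases "state k g z = 1")
  case True
  then have zu: "z \<in> unmatched n k g 1" using z unfolding unmatched_def by simp
  then have \<sigma>z: "\<sigma> z \<in> unmatched n k g 2" and inv: "inv_into (unmatched n k g 1) \<sigma> (\<sigma> z) = z"
    using bij_\<sigma> by (auto simp: bij_betw_def)
  have w: "\<sigma> z \<in> bottom n" "edge_type g (\<sigma> z) = 2" "state k g (\<sigma> z) = 2"
    using unmatched_D[OF \<sigma>z] by auto
  have "\<phi> (insert 0 z) = \<sigma> z" using dictator_map_top[OF z] t True by simp
  moreover have "\<phi> (\<sigma> z) = insert 0 z" using dictator_map_bottom[OF w(1)] w inv by simp
  ultimately show ?thesis using that[of "\<sigma> z"] w zu by blast
next
  case False
  have t0: "edge_type g z \<noteq> 0" using t by simp
  have s0: "state k g z = 0" using state_nonzero[of k g z] t False by auto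
  note p = partner_props[OF z t0 s0 k_less_n]
  have pt: "edge_type g (partner k g z) = 2" using p(2) t by simp
  have "\<phi> (insert 0 z) = partner k g z" using dictator_map_top[OF z] t False by simp
  moreover have "\<phi> (partner k g z) = insert 0 z" using dictator_map_bottom[OF p(1)] pt p(3,4) by simp
  ultimately show ?thesis using that[of "partner k g z"] p(1,5) pt by simp
qed

lemma bottom_of_true_edge:
  assumes z: "z \<in> bottom n" and t: "edge_type g z = 2"
  obtains w where "w \<in> bottom n" "edge_type g w = 1" "\<phi> z = insert 0 w" "\<phi> (insert 0 w) = z"
    "z \<notin> unmatched n k g 2 \<Longrightarrow> hdist z (insert 0 w) \<le> 2"
proof (cases "state k g z = 2")
  case True
  then have zu: "z \<in> unmatched n k g 2" using z unfolding unmatched_def by simp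
  let ?w = "inv_into (unmatched n k g 1) \<sigma> z"
  have wu: "?w \<in> unmatched n k g 1" and \<sigma>w: "\<sigma> ?w = z"
    using bij_\<sigma> zu by (auto simp: bij_betw_def inv_into_into f_inv_into_f)
  have w: "?w \<in> bottom n" "edge_type g ?w = 1" "state k g ?w = 1"
    using unmatched_D[OF wu] by auto
  have "\<phi> z = insert 0 ?w" using dictator_map_bottom[OF z] t True by simp
  moreover have "\<phi> (insert 0 ?w) = z" using dictator_map_top[OF w(1)] w \<sigma>w by simp
  ultimately show ?thesis using that[of ?w] w zu by blast
next
  case False
  have t0: "edge_type g z \<noteq> 0" using t by simp
  have s0: "state k g z = 0" using state_nonzero[of k g z] t False by auto
  note p = partner_props[OF z t0 s0 k_less_n]
  have pt: "edge_type g (partner k g z) = 1" using p(2) t by simp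
  have "\<phi> z = insert 0 (partner k g z)" using dictator_map_bottom[OF z] t False by simp
  moreover have "\<phi> (insert 0 (partner k g z)) = z" using dictator_map_top[OF p(1)] pt p(3,4) by simp
  ultimately show ?thesis using that[of "partner k g z"] p(1,6) pt by simp
qed

lemma mapped_correctly_type_1:
  assumes z: "z \<in> bottom n" and t: "edge_type g z = 1" and x: "x \<in> {z, insert 0 z}"
  shows "mapped_correctly x"
proof -
  obtain w where w: "w \<in> bottom n" "edge_type g w = 2" "\<phi> (insert 0 z) = w" "\<phi> w = insert 0 z"
    and close: "z \<notin> unmatched n k g 1 \<Longrightarrow> hdist (insert 0 z) w \<le> 2"
    using top_of_false_edge[OF z t] by blast
  have z0: "0 \<notin> z" using zero_notin_bottom[OF z] .
  have \<phi>z: "\<phi> z = z" using dictator_map_bottom[OF z] t by simp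
  have g: "\<not> g z" "g w" using t w(2) edge_type_1_iff[of g z] edge_type_2_iff[of g w] by simp_all
  have far: "insert 0 z \<notin> far_points \<Longrightarrow> z \<notin> unmatched n k g 1"
    unfolding far_points_def by blast
  consider "x = z" | "x = insert 0 z" using x by blast
  then show ?thesis
  proof cases
    case 1
    then show ?thesis using \<phi>z g z0 bottom_subset_cube z unfolding mapped_correctly_def dictator_def by auto
  next
    case 2
    then show ?thesis using w g close far bottom_subset_cube unfolding mapped_correctly_def dictator_def by auto
  qed
qed

lemma mapped_correctly_type_2:
  assumes z: "z \<in> bottom n" and t: "edge_type g z = 2" and x: "x \<in> {z, insert 0 z}"
  shows "mapped_correctly x"
proof -
  obtain w where w: "w \<in> bottom n" "edge_type g w = 1" "\<phi> z = insert 0 w" "\<phi> (insert 0 w) = z"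
    and close: "z \<notin> unmatched n k g 2 \<Longrightarrow> hdist z (insert 0 w) \<le> 2"
    using bottom_of_true_edge[OF z t] by blast
  have z0: "0 \<notin> z" using zero_notin_bottom[OF z] .
  have \<phi>z: "\<phi> (insert 0 z) = insert 0 z" using dictator_map_top[OF z] t by simp
  have g: "g (insert 0 z)" "\<not> g (insert 0 w)"
    using t w(2) edge_type_2_iff[of g z] edge_type_1_iff[of g w] by simp_all
  have far: "z \<notin> far_points \<Longrightarrow> z \<notin> unmatched n k g 2"
    unfolding far_points_def by blast
  consider "x = z" | "x = insert 0 z" using x by blast
  then show ?thesis
  proof cases
    case 1
    then show ?thesis using w g close far z0 insert_0_bottom_in_cube[OF w(1) n_ge_1]
      unfolding mapped_correctly_def dictator_def by auto
  next
    case 2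
    then show ?thesis using \<phi>z g insert_0_bottom_in_cube[OF z n_ge_1]
      unfolding mapped_correctly_def dictator_def by auto
  qed
qed

lemma mapped_correctly_on_cube:
  assumes "x \<in> cube n"
  shows "mapped_correctly x"
proof -
  obtain z where z: "z \<in> bottom n" "x \<in> {z, insert 0 z}"
    using assms cube_eq_bottom_Un[OF n_ge_1] by blast
  show ?thesis using edge_type_cases[of g z] mapped_correctly_type_0[OF z(1) _ z(2)]
    mapped_correctly_type_1[OF z(1) _ z(2)] mapped_correctly_type_2[OF z(1) _ z(2)] by blast
qed

lemma card_far_points: "card far_points \<le> 2 * card (unmatched n k g 1)"
proof -
  have "card far_points \<le> card (insert 0 ` unmatched n k g 1) + card (unmatched n k g 2)"
    unfolding far_points_def by (rule card_Un_le)
  also have "card (insert 0 ` unmatched n k g 1) \<le> card (unmatched n k g 1)"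
    by (rule card_image_le[OF finite_unmatched])
  finally show ?thesis using bij_betw_same_card[OF bij_\<sigma>] by simp
qed

end

lemma exists_involutive_dictator_mapping:
  assumes n1: "n \<ge> 1" and kn: "k < n" and f: "f \<in> balanced_funs n"
  obtains \<phi> B where "is_mapping n dictator f \<phi>"
    "\<And>x. x \<in> cube n \<Longrightarrow> \<phi> x \<in> cube n" "\<And>x. x \<in> cube n \<Longrightarrow> \<phi> (\<phi> x) = x"
    "finite B" "card B \<le> 2 * card (unmatched n k f 1)" "\<And>x. x \<in> cube n - B \<Longrightarrow> hdist x (\<phi> x) \<le> 2"
proof -
  have "card {x \<in> cube n. f x} = 2 ^ (n - 1)" using f unfolding balanced_funs_def by blast
  then have "card (unmatched n k f 1) = card (unmatched n k f 2)"
    by (rule card_unmatched_1_eq_2[OF n1 kn])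
  then obtain \<sigma> where \<sigma>: "bij_betw \<sigma> (unmatched n k f 1) (unmatched n k f 2)"
    using finite_same_card_bij[OF finite_unmatched finite_unmatched] by blast
  interpret dictator_matching n k f \<sigma> using n1 kn \<sigma> by unfold_locales
  have into: "\<phi> x \<in> cube n" and invol: "\<phi> (\<phi> x) = x" and dict: "f (\<phi> x) = dictator x"
    and close: "x \<notin> far_points \<Longrightarrow> hdist x (\<phi> x) \<le> 2" if "x \<in> cube n" for x
    using mapped_correctly_on_cube[OF that] unfolding mapped_correctly_def by auto
  have "bij_betw \<phi> (cube n) (cube n)"
    by (rule bij_betw_byWitness[where f'=\<phi>]) (use into invol in auto)
  then have "is_mapping n dictator f \<phi>"
    using dict unfolding is_mapping_def by simp
  moreover have "finite far_points"
    unfolding far_points_def using finite_unmatched by simp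
  ultimately show ?thesis
    using that[of \<phi> far_points] into invol card_far_points close by blast
qed

section \<open>Stretch of involutions of the cube\<close>

lemma avgStretch_le_sum_hdist:
  assumes n1: "n \<ge> 1" and into: "\<And>x. x \<in> cube n \<Longrightarrow> \<phi> x \<in> cube n"
  shows "avgStretch n \<phi> \<le> 1 + 2 * (\<Sum>x\<in>cube n. real (hdist x (\<phi> x))) / 2 ^ n"
proof -
  let ?d = "\<lambda>x. real (hdist x (\<phi> x))"
  let ?D = "\<Sum>x\<in>cube n. ?d x"
  have tri: "real (hdist (\<phi> x) (\<phi> (flip x i))) \<le> ?d x + 1 + ?d (flip x i)"
    if x: "x \<in> cube n" and i: "i < n" for x i
  proof -
    have fx: "flip x i \<in> cube n" using flip_in_cube[OF x i] .
    have fin: "finite (\<phi> x)" "finite x" "finite (flip x i)" "finite (\<phi> (flip x i))"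
      using finite_of_mem_cube into x fx by auto
    have "hdist (\<phi> x) (\<phi> (flip x i)) \<le> hdist (\<phi> x) x + hdist x (\<phi> (flip x i))"
      using hdist_triangle fin by blast
    also have "hdist x (\<phi> (flip x i)) \<le> hdist x (flip x i) + hdist (flip x i) (\<phi> (flip x i))"
      using hdist_triangle fin by blast
    finally show ?thesis using hdist_flip[of x i] hdist_commute[of "\<phi> x" x] by simp
  qed
  have "(\<Sum>x\<in>cube n. \<Sum>i<n. real (hdist (\<phi> x) (\<phi> (flip x i))))
      \<le> (\<Sum>x\<in>cube n. \<Sum>i<n. ?d x + 1 + ?d (flip x i))"
    using tri by (intro sum_mono) auto
  also have "\<dots> = real n * ?D + real n * 2 ^ n + (\<Sum>i<n. \<Sum>x\<in>cube n. ?d (flip x i))"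
    by (simp add: sum.distrib sum.swap[of _ "cube n" "{..<n}"] card_cube sum_distrib_left mult.commute)
       (simp add: distrib_left sum.distrib card_cube)
  also have "(\<Sum>i<n. \<Sum>x\<in>cube n. ?d (flip x i)) = (\<Sum>i<n. ?D)"
    by (rule sum.cong[OF refl]) (use sum.reindex_bij_betw[OF bij_betw_flip, of _ n ?d] in simp)
  finally have "(\<Sum>x\<in>cube n. \<Sum>i<n. real (hdist (\<phi> x) (\<phi> (flip x i))))
      \<le> (2 * real n * ?D + real n * 2 ^ n)"
    by simp
  then have "avgStretch n \<phi> \<le> (2 * real n * ?D + real n * 2 ^ n) / (2 ^ n * real n)"
    unfolding avgStretch_def by (intro divide_right_mono) auto
  also have "\<dots> = 1 + 2 * ?D / 2 ^ n" using n1 by (simp add: field_simps)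
  finally show ?thesis .
qed

lemma avgStretch_le_dim:
  assumes n1: "n \<ge> 1" and into: "\<And>x. x \<in> cube n \<Longrightarrow> \<phi> x \<in> cube n"
  shows "avgStretch n \<phi> \<le> real n"
proof -
  have "(\<Sum>x\<in>cube n. \<Sum>i<n. real (hdist (\<phi> x) (\<phi> (flip x i)))) \<le> (\<Sum>x\<in>cube n. \<Sum>i<n. real n)"
    using hdist_le_dim into flip_in_cube by (intro sum_mono) (simp add: of_nat_le_iff)
  also have "\<dots> = 2 ^ n * real n * real n" by (simp add: card_cube)
  finally show ?thesis unfolding avgStretch_def using n1 by (simp add: divide_le_eq algebra_simps)
qed

lemma avgStretch_inv_into_involution:
  assumes into: "\<And>x. x \<in> cube n \<Longrightarrow> \<phi> x \<in> cube n" and invol: "\<And>x. x \<in> cube n \<Longrightarrow> \<phi> (\<phi> x) = x"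
  shows "avgStretch n (inv_into (cube n) \<phi>) = avgStretch n \<phi>"
proof -
  have "inj_on \<phi> (cube n)" using invol by (metis inj_onI)
  then have "inv_into (cube n) \<phi> x = \<phi> x" if "x \<in> cube n" for x
    using that into invol by (intro inv_into_f_eq) auto
  then show ?thesis
    unfolding avgStretch_def by (intro arg_cong2[where f="(/)"] refl sum.cong) (auto simp: flip_in_cube)
qed

lemma sum_hdist_le:
  assumes into: "\<And>x. x \<in> cube n \<Longrightarrow> \<phi> x \<in> cube n" and "finite B"
    and close: "\<And>x. x \<in> cube n - B \<Longrightarrow> hdist x (\<phi> x) \<le> 2"
  shows "(\<Sum>x\<in>cube n. real (hdist x (\<phi> x))) \<le> 2 * 2 ^ n + real n * real (card B)"
proof -
  have "(\<Sum>x\<in>cube n. real (hdist x (\<phi> x))) \<le> (\<Sum>x\<in>cube n. 2 + (if x \<in> B then real n else 0))"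
  proof (rule sum_mono)
    fix x assume x: "x \<in> cube n"
    show "real (hdist x (\<phi> x)) \<le> 2 + (if x \<in> B then real n else 0)"
      using close[of x] hdist_le_dim[OF x into[OF x]] x by (cases "x \<in> B") auto
  qed
  also have "\<dots> = 2 * 2 ^ n + real n * real (card (cube n \<inter> B))"
    by (simp add: sum.distrib sum.If_cases finite_cube card_cube Int_def)
  also have "\<dots> \<le> 2 * 2 ^ n + real n * real (card B)"
    using assms(2) by (simp add: card_mono mult_left_mono)
  finally show ?thesis .
qed

lemma avgStretch_le_card_far:
  assumes n1: "n \<ge> 1" and into: "\<And>x. x \<in> cube n \<Longrightarrow> \<phi> x \<in> cube n" and B: "finite B"
    and close: "\<And>x. x \<in> cube n - B \<Longrightarrow> hdist x (\<phi> x) \<le> 2"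
  shows "avgStretch n \<phi> \<le> 5 + 2 * real n * (real (card B) / 2 ^ n)"
proof -
  have "avgStretch n \<phi> \<le> 1 + 2 * (2 * 2 ^ n + real n * real (card B)) / 2 ^ n"
    using avgStretch_le_sum_hdist[of n \<phi>, OF n1 into] sum_hdist_le[of n \<phi> B, OF into B close]
    by (smt (verit) divide_right_mono zero_le_power)
  also have "\<dots> = 5 + 2 * real n * (real (card B) / 2 ^ n)" by (simp add: field_simps)
  finally show ?thesis .
qed

lemma unif_prob_close_ge:
  assumes "finite B" and close: "\<And>x. x \<in> cube n - B \<Longrightarrow> hdist x (\<phi> x) \<le> 2"
  shows "unif_prob (cube n) (\<lambda>x. hdist x (\<phi> x) \<le> 2) \<ge> 1 - real (card B) / 2 ^ n"
proof -
  have "card (cube n \<inter> B) \<le> card B" using assms(1) by (simp add: card_mono)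
  then have "1 - real (card B) / 2 ^ n \<le> 1 - real (card (cube n \<inter> B)) / real (card (cube n))"
    by (simp add: card_cube divide_right_mono)
  also have "\<dots> \<le> unif_prob (cube n) (\<lambda>x. hdist x (\<phi> x) \<le> 2)"
    using close by (intro unif_prob_ge_one_minus_card) (auto simp: card_cube)
  finally show ?thesis .
qed

section \<open>Concentration of the number of unmatched edges\<close>

text \<open>After \<open>k\<close> rounds,
  the state of an edge depends only on \<open>g\<close> restricted to its own block, so the numbers of unmatched
  edges in different blocks are independent.\<close>

definition tails :: "nat \<Rightarrow> nat \<Rightarrow> nat set set" where
  "tails n k = Pow {k<..<n}"

definition block :: "nat \<Rightarrow> nat \<Rightarrow> nat set \<Rightarrow> nat set set" where
  "block n k y = {x \<in> cube n. x \<inter> {k<..} = y}"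

definition bottom_block :: "nat \<Rightarrow> nat \<Rightarrow> nat set \<Rightarrow> nat set set" where
  "bottom_block n k y = {z \<in> bottom n. z \<inter> {k<..} = y}"

definition block_unmatched :: "nat \<Rightarrow> nat \<Rightarrow> nat set \<Rightarrow> (nat set \<Rightarrow> bool) \<Rightarrow> real" where
  "block_unmatched n k y g = (\<Sum>z\<in>bottom_block n k y. if state k g z = 1 then 1 else 0)"

lemma finite_tails: "finite (tails n k)"
  unfolding tails_def by simp

lemma finite_block: "finite (block n k y)"
  unfolding block_def using finite_cube by simp

lemma finite_bottom_block: "finite (bottom_block n k y)"
  unfolding bottom_block_def using finite_bottom by simp

lemma bottom_block_disjoint: "y \<noteq> y' \<Longrightarrow> bottom_block n k y \<inter> bottom_block n k y' = {}"
  unfolding bottom_block_def by auto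

lemma UN_block: "(\<Union>y\<in>tails n k. block n k y) = cube n"
proof
  show "cube n \<subseteq> (\<Union>y\<in>tails n k. block n k y)"
  proof
    fix x assume "x \<in> cube n"
    then have "x \<inter> {k<..} \<in> tails n k" "x \<in> block n k (x \<inter> {k<..})"
      unfolding tails_def block_def cube_def by auto
    then show "x \<in> (\<Union>y\<in>tails n k. block n k y)" by blast
  qed
qed (auto simp: block_def)

lemma UN_bottom_block: "(\<Union>y\<in>tails n k. bottom_block n k y) = bottom n"
proof
  show "bottom n \<subseteq> (\<Union>y\<in>tails n k. bottom_block n k y)"
  proof
    fix z assume "z \<in> bottom n"
    then have "z \<inter> {k<..} \<in> tails n k" "z \<in> bottom_block n k (z \<inter> {k<..})"
      unfolding tails_def bottom_block_def bottom_def by auto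
    then show "z \<in> (\<Union>y\<in>tails n k. bottom_block n k y)" by blast
  qed
qed (auto simp: bottom_block_def)

lemma state_support_subset_block:
  assumes "z \<in> bottom_block n k y" "k < n"
  shows "state_support k z \<subseteq> block n k y"
proof
  fix w assume w: "w \<in> state_support k z"
  have "z \<subseteq> {..<n}" using assms unfolding bottom_block_def bottom_def by auto
  then have "w \<in> cube n" using state_support_subset_cube w assms(2) by blast
  moreover have "w \<inter> {k<..} = z \<inter> {k<..}" using state_support_coord[OF w] by auto
  ultimately show "w \<in> block n k y" using assms unfolding block_def bottom_block_def by auto
qed

lemma depends_only_on_block_unmatched:
  assumes "k < n"
  shows "depends_only_on (block n k y) (block_unmatched n k y)"
  unfolding block_unmatched_def
proof (rule depends_only_on_sum)
  fix z assume "z \<in> bottom_block n k y"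
  then show "depends_only_on (block n k y) (\<lambda>g. if state k g z = 1 then 1 else 0)"
    by (rule depends_only_on_mono[OF depends_only_on_comp[OF depends_only_on_state]
          state_support_subset_block[OF _ assms]])
qed

lemma avg_on_block_unmatched:
  assumes "k < n"
  shows "avg_on (block n k y) (block_unmatched n k y) = real (card (bottom_block n k y)) * unmatched_prob k"
proof -
  have "avg_on (block n k y) (\<lambda>g. if state k g z = 1 then 1 else 0) = unmatched_prob k"
    if z: "z \<in> bottom_block n k y" for z
  proof -
    have "avg_on (block n k y) (\<lambda>g. if state k g z = 1 then 1 else 0)
        = avg_on (state_support k z) (\<lambda>g. if state k g z = 1 then 1 else 0)"
      by (rule avg_on_superset[OF state_support_subset_block[OF z assms] finite_block
            depends_only_on_comp[OF depends_only_on_state]])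
    also have "\<dots> = unmatched_prob k"
      using z by (intro avg_on_state_eq) (auto simp: bottom_block_def bottom_def)
    finally show ?thesis .
  qed
  then show ?thesis
    unfolding block_unmatched_def using finite_bottom
    by (simp add: avg_on_sum bottom_block_def)
qed

lemma card_bottom_block_le: "card (bottom_block n k y) \<le> 2 ^ k"
proof -
  have "bottom_block n k y \<subseteq> (\<lambda>s. s \<union> y) ` Pow {1..k}"
  proof
    fix z assume z: "z \<in> bottom_block n k y"
    then have z0: "0 \<notin> z" and y: "y = z \<inter> {k<..}" unfolding bottom_block_def bottom_def by auto
    have "z = (z \<inter> {1..k}) \<union> y"
    proof (rule set_eqI)
      fix x show "x \<in> z \<longleftrightarrow> x \<in> (z \<inter> {1..k}) \<union> y"
        using z0 y by (cases "x = 0") auto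
    qed
    then show "z \<in> (\<lambda>s. s \<union> y) ` Pow {1..k}" by blast
  qed
  then have "card (bottom_block n k y) \<le> card ((\<lambda>s. s \<union> y) ` Pow {1..k})" by (intro card_mono) auto
  also have "\<dots> \<le> card (Pow {1..k})" by (rule card_image_le) simp
  finally show ?thesis by (simp add: card_Pow)
qed

lemma block_unmatched_bounds: "0 \<le> block_unmatched n k y g \<and> block_unmatched n k y g \<le> 2 ^ k"
proof
  show "0 \<le> block_unmatched n k y g"
    unfolding block_unmatched_def by (intro sum_nonneg) simp
  have "block_unmatched n k y g \<le> (\<Sum>z\<in>bottom_block n k y. 1)"
    unfolding block_unmatched_def by (intro sum_mono) simp
  also have "\<dots> \<le> real ((2::nat) ^ k)"
    using card_bottom_block_le[of n k y] by (simp only: sum_constant mult_1_right of_nat_le_iff)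
  finally show "block_unmatched n k y g \<le> 2 ^ k" by simp
qed

lemma card_unmatched_eq_sum_blocks:
  "real (card (unmatched n k g 1)) = (\<Sum>y\<in>tails n k. block_unmatched n k y g)"
proof -
  have "real (card (unmatched n k g 1)) = (\<Sum>z\<in>bottom n. if state k g z = 1 then 1 else 0)"
    unfolding unmatched_def by (simp add: sum.If_cases finite_bottom Int_def)
  also have "\<dots> = (\<Sum>z\<in>(\<Union>y\<in>tails n k. bottom_block n k y). if state k g z = 1 then 1 else 0)"
    by (simp only: UN_bottom_block)
  also have "\<dots> = (\<Sum>y\<in>tails n k. block_unmatched n k y g)"
    unfolding block_unmatched_def
    by (rule sum.UNION_disjoint[OF finite_tails]) (auto simp: finite_bottom_block bottom_block_disjoint)
  finally show ?thesis .
qed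

lemma sum_card_bottom_block: "(\<Sum>y\<in>tails n k. card (bottom_block n k y)) = card (bottom n)"
proof -
  have "card (\<Union>y\<in>tails n k. bottom_block n k y) = (\<Sum>y\<in>tails n k. card (bottom_block n k y))"
    by (rule card_UN_disjoint[OF finite_tails]) (auto simp: finite_bottom_block bottom_block_disjoint)
  then show ?thesis by (simp only: UN_bottom_block)
qed

lemma exp_le_1_plus_2x:
  fixes x :: real
  assumes "0 \<le> x" "x \<le> 1"
  shows "exp x \<le> 1 + 2 * x"
proof -
  have "x * x \<le> x * 1" using assms by (intro mult_left_mono)
  then show ?thesis using exp_bound[OF assms] by (simp add: power2_eq_square)
qed

lemma avg_on_exp_block_unmatched_le:
  assumes "k < n"
  shows "avg_on (block n k y) (\<lambda>g. exp (block_unmatched n k y g / 2 ^ k))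
    \<le> exp (2 * real (card (bottom_block n k y)) * unmatched_prob k / 2 ^ k)"
proof -
  have "avg_on (block n k y) (\<lambda>g. exp (block_unmatched n k y g / 2 ^ k))
      \<le> avg_on (block n k y) (\<lambda>g. 1 + (2 / 2 ^ k) * block_unmatched n k y g)"
  proof (rule avg_on_mono[OF finite_block])
    fix g
    have "0 \<le> block_unmatched n k y g / 2 ^ k" "block_unmatched n k y g / 2 ^ k \<le> 1"
      using block_unmatched_bounds[of n k y g] by (simp_all add: divide_le_eq_1)
    from exp_le_1_plus_2x[OF this]
    show "exp (block_unmatched n k y g / 2 ^ k) \<le> 1 + (2 / 2 ^ k) * block_unmatched n k y g"
      by simp
  qed
  also have "\<dots> = 1 + (2 / 2 ^ k) * avg_on (block n k y) (block_unmatched n k y)"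
    by (simp only: avg_on_add avg_on_cmult avg_on_const[OF finite_block])
  also have "\<dots> = 1 + 2 * real (card (bottom_block n k y)) * unmatched_prob k / 2 ^ k"
    by (simp add: avg_on_block_unmatched[OF assms])
  also have "\<dots> \<le> exp (2 * real (card (bottom_block n k y)) * unmatched_prob k / 2 ^ k)"
    by (rule exp_ge_add_one_self)
  finally show ?thesis .
qed

lemma avg_on_exp_unmatched_le:
  assumes n1: "n \<ge> 1" and kn: "k < n"
  shows "avg_on (cube n) (\<lambda>g. exp (real (card (unmatched n k g 1)) / 2 ^ k))
    \<le> exp (2 * unmatched_prob k * 2 ^ (n - 1) / 2 ^ k)"
proof -
  let ?h = "\<lambda>y g. exp (block_unmatched n k y g / 2 ^ k)"
  let ?b = "\<lambda>y. 2 * real (card (bottom_block n k y)) * unmatched_prob k / 2 ^ k"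
  have "avg_on (cube n) (\<lambda>g. exp (real (card (unmatched n k g 1)) / 2 ^ k))
      = avg_on (\<Union>y\<in>tails n k. block n k y) (\<lambda>g. \<Prod>y\<in>tails n k. ?h y g)"
    by (simp only: UN_block card_unmatched_eq_sum_blocks sum_divide_distrib exp_sum[OF finite_tails])
  also have "\<dots> = (\<Prod>y\<in>tails n k. avg_on (block n k y) (?h y))"
  proof (rule avg_on_prod_disjoint[OF finite_tails finite_block])
    show "depends_only_on (block n k y) (?h y)" if "y \<in> tails n k" for y
      by (rule depends_only_on_comp[OF depends_only_on_block_unmatched[OF kn]])
    show "block n k y \<inter> block n k y' = {}" if "y \<in> tails n k" "y' \<in> tails n k" "y \<noteq> y'" for y y'
      using that(3) by (auto simp: block_def)
  qed
  also have "\<dots> \<le> (\<Prod>y\<in>tails n k. exp (?b y))"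
    using avg_on_exp_block_unmatched_le[OF kn] by (intro prod_mono) (simp add: avg_on_nonneg)
  also have "\<dots> = exp (\<Sum>y\<in>tails n k. ?b y)"
    by (simp add: exp_sum finite_tails)
  also have "(\<Sum>y\<in>tails n k. ?b y)
      = 2 * unmatched_prob k / 2 ^ k * real (\<Sum>y\<in>tails n k. card (bottom_block n k y))"
    by (simp add: sum_distrib_left sum_divide_distrib[symmetric] mult_ac)
  also have "\<dots> = 2 * unmatched_prob k * 2 ^ (n - 1) / 2 ^ k"
    using sum_card_bottom_block[of n k] card_bottom[OF n1] by simp
  finally show ?thesis .
qed

lemma balanced_funs_subset_funs_on: "balanced_funs n \<subseteq> funs_on (cube n)"
  unfolding balanced_funs_def funs_on_def by auto

lemma card_balanced_funs: "card (balanced_funs n) = (2 ^ n) choose (2 ^ (n - 1))"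
proof -
  have "bij_betw (\<lambda>S x. x \<in> S) {S. S \<subseteq> cube n \<and> card S = 2 ^ (n - 1)} (balanced_funs n)"
  proof (rule bij_betw_byWitness[where f'="\<lambda>f. {x. f x}"])
    show "(\<lambda>S x. x \<in> S) ` {S. S \<subseteq> cube n \<and> card S = 2 ^ (n - 1)} \<subseteq> balanced_funs n"
    proof
      fix f assume "f \<in> (\<lambda>S x. x \<in> S) ` {S. S \<subseteq> cube n \<and> card S = 2 ^ (n - 1)}"
      then obtain S where S: "S \<subseteq> cube n" "card S = 2 ^ (n - 1)" "f = (\<lambda>x. x \<in> S)" by blast
      then have "{x \<in> cube n. x \<in> S} = S" by auto
      then show "f \<in> balanced_funs n" using S unfolding balanced_funs_def by auto
    qed
    show "(\<lambda>f. {x. f x}) ` balanced_funs n \<subseteq> {S. S \<subseteq> cube n \<and> card S = 2 ^ (n - 1)}"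
    proof
      fix S assume "S \<in> (\<lambda>f. {x. f x}) ` balanced_funs n"
      then obtain f where f: "f \<in> balanced_funs n" "S = {x. f x}" by blast
      then have "{x. f x} = {x \<in> cube n. f x}" unfolding balanced_funs_def by auto
      then show "S \<in> {S. S \<subseteq> cube n \<and> card S = 2 ^ (n - 1)}" using f unfolding balanced_funs_def by auto
    qed
  qed auto
  then have "card (balanced_funs n) = card {S. S \<subseteq> cube n \<and> card S = 2 ^ (n - 1)}"
    by (simp add: bij_betw_same_card)
  also have "\<dots> = (2 ^ n) choose (2 ^ (n - 1))" using n_subsets[OF finite_cube] card_cube by simp
  finally show ?thesis .
qed

lemma card_balanced_funs_ge:
  assumes "n \<ge> 1"
  shows "real (card (balanced_funs n)) \<ge> 2 ^ (2 ^ n) / 2 ^ n"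
proof -
  let ?m = "2 ^ (n - 1) :: nat"
  have m: "2 * ?m = 2 ^ n" using assms by (cases n) auto
  have "4 ^ ?m / (2 * real ?m) \<le> real ((2 * ?m) choose ?m)"
    by (rule central_binomial_lower_bound) simp
  moreover have "(4::real) ^ ?m = 2 ^ (2 ^ n)"
    by (metis m power_mult power2_eq_square numeral_Bit0 numeral_times_numeral mult_2 power_even_eq num_double)
  moreover have "2 * real ?m = 2 ^ n" using m by (metis of_nat_mult of_nat_numeral of_nat_power)
  ultimately show ?thesis unfolding card_balanced_funs using m by simp
qed

lemma card_balanced_funs_pos: "n \<ge> 1 \<Longrightarrow> card (balanced_funs n) > 0"
  using card_balanced_funs_ge[of n] by (smt (verit) divide_pos_pos of_nat_0_less_iff zero_less_power)

lemma card_many_unmatched_le: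
  assumes n1: "n \<ge> 1" and kn: "k < n"
  shows "real (card {f \<in> balanced_funs n. 3 * 2 ^ (n - 1) / (real k + 4) \<le> real (card (unmatched n k f 1))})
    \<le> 2 ^ (2 ^ n) * exp (- (2 ^ (n - 1) / 2 ^ k / (real k + 4)))"
proof -
  define M :: real where "M = 2 ^ (n - 1) / 2 ^ k"
  define T where "T = 3 * M / (real k + 4)"
  let ?V = "\<lambda>g. real (card (unmatched n k g 1)) / 2 ^ k"
  let ?Many = "{f \<in> balanced_funs n. 3 * 2 ^ (n - 1) / (real k + 4) \<le> real (card (unmatched n k f 1))}"
  have T_eq: "T = 3 * 2 ^ (n - 1) / (real k + 4) / 2 ^ k" unfolding T_def M_def by simp
  have "?Many \<subseteq> {g \<in> funs_on (cube n). T \<le> ?V g}"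
  proof
    fix f assume f: "f \<in> ?Many"
    then have "3 * 2 ^ (n - 1) / (real k + 4) / 2 ^ k \<le> ?V f" by (intro divide_right_mono) auto
    then show "f \<in> {g \<in> funs_on (cube n). T \<le> ?V g}"
      using f balanced_funs_subset_funs_on unfolding T_eq by auto
  qed
  then have "real (card ?Many) * exp T \<le> real (card {g \<in> funs_on (cube n). T \<le> ?V g}) * exp T"
    by (simp add: card_mono finite_funs_on finite_cube)
  also have "\<dots> \<le> real (card (funs_on (cube n))) * avg_on (cube n) (\<lambda>g. exp (?V g))"
    by (rule card_exp_ge_le_avg_on[OF finite_cube])
  also have "\<dots> \<le> 2 ^ (2 ^ n) * exp (2 * unmatched_prob k * M)"
    using avg_on_exp_unmatched_le[OF n1 kn] by (simp add: card_funs_on finite_cube card_cube M_def)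
  finally have "real (card ?Many) \<le> 2 ^ (2 ^ n) * exp (2 * unmatched_prob k * M - T)"
    by (simp add: exp_diff le_divide_eq)
  also have "\<dots> \<le> 2 ^ (2 ^ n) * exp (- (M / (real k + 4)))"
  proof -
    have "(2 * M) * unmatched_prob k \<le> (2 * M) * (1 / (real k + 4))"
      using unmatched_prob_bounds[of k] by (intro mult_left_mono) (auto simp: M_def)
    then have "2 * unmatched_prob k * M - T \<le> 2 * M / (real k + 4) - 3 * M / (real k + 4)"
      unfolding T_def by (simp add: mult_ac)
    also have "\<dots> = (2 * M - 3 * M) / (real k + 4)" by (rule diff_divide_distrib[symmetric])
    also have "\<dots> = - (M / (real k + 4))" by simp
    finally show ?thesis by simp
  qed
  finally show ?thesis unfolding M_def .
qed

definition has_good_mapping :: "nat \<Rightarrow> real \<Rightarrow> real \<Rightarrow> (nat set \<Rightarrow> bool) \<Rightarrow> bool" where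
  "has_good_mapping n C C' f \<longleftrightarrow> (\<exists>\<phi>. is_mapping n dictator f \<phi>
     \<and> unif_prob (cube n) (\<lambda>x. hdist x (\<phi> x) \<le> 2) \<ge> 1 - C / real n
     \<and> avgStretch n \<phi> \<le> C' \<and> avgStretch n (inv_into (cube n) \<phi>) \<le> C')"

lemma has_good_mapping_if_small_dim:
  assumes n1: "n \<ge> 1" and f: "f \<in> balanced_funs n" and C: "real n \<le> C" and C': "real n \<le> C'"
  shows "has_good_mapping n C C' f"
proof -
  have n0: "0 < n" using n1 by simp
  obtain \<phi> B where \<phi>: "is_mapping n dictator f \<phi>" and into: "\<And>x. x \<in> cube n \<Longrightarrow> \<phi> x \<in> cube n"
    and invol: "\<And>x. x \<in> cube n \<Longrightarrow> \<phi> (\<phi> x) = x" and "finite B"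
    and "card B \<le> 2 * card (unmatched n 0 f 1)" and "\<And>x. x \<in> cube n - B \<Longrightarrow> hdist x (\<phi> x) \<le> 2"
    using exists_involutive_dictator_mapping[OF n1 n0 f] by blast
  have "1 - C / real n \<le> 0" using n1 C by (simp add: field_simps)
  moreover have "0 \<le> unif_prob (cube n) (\<lambda>x. hdist x (\<phi> x) \<le> 2)" unfolding unif_prob_def by simp
  ultimately show ?thesis
    unfolding has_good_mapping_def
    using \<phi> avgStretch_le_dim[of n \<phi>, OF n1 into] avgStretch_inv_into_involution[of n \<phi>, OF into invol] C'
    by (intro exI[of _ \<phi>]) auto
qed

lemma has_good_mapping_if_few_unmatched:
  assumes n1: "n \<ge> 1" and f: "f \<in> balanced_funs n"
    and few: "real (card (unmatched n (n div 2) f 1)) < 3 * 2 ^ (n - 1) / (real (n div 2) + 4)"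
    and C: "6 \<le> C" and C': "17 \<le> C'"
  shows "has_good_mapping n C C' f"
proof -
  define k where "k = n div 2"
  have kn: "k < n" and k2: "real n \<le> 2 * real k + 1" using n1 unfolding k_def by simp_all
  obtain \<phi> B where \<phi>: "is_mapping n dictator f \<phi>" and into: "\<And>x. x \<in> cube n \<Longrightarrow> \<phi> x \<in> cube n"
    and invol: "\<And>x. x \<in> cube n \<Longrightarrow> \<phi> (\<phi> x) = x" and B: "finite B"
    and card_B: "card B \<le> 2 * card (unmatched n k f 1)"
    and close: "\<And>x. x \<in> cube n - B \<Longrightarrow> hdist x (\<phi> x) \<le> 2"
    using exists_involutive_dictator_mapping[OF n1 kn f] by blast
  have far: "real (card B) / 2 ^ n \<le> 3 / (real k + 4)"
  proof -
    have "(2::real) ^ n = 2 * 2 ^ (n - 1)" using n1 by (cases n) auto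
    moreover have "real (card B) \<le> 2 * real (card (unmatched n k f 1))"
      using card_B by linarith
    ultimately have "real (card B) < 3 * 2 ^ n / (real k + 4)"
      using few unfolding k_def[symmetric] by simp
    then show ?thesis by (simp add: field_simps)
  qed
  have "3 / (real k + 4) \<le> C / real n"
  proof -
    have "6 * real k \<le> C * real k" using C by (intro mult_right_mono) auto
    then show ?thesis using k2 C n1 by (simp add: field_simps)
  qed
  then have "1 - C / real n \<le> unif_prob (cube n) (\<lambda>x. hdist x (\<phi> x) \<le> 2)"
    using unif_prob_close_ge[of B n \<phi>, OF B close] far by linarith
  moreover have "avgStretch n \<phi> \<le> C'"
  proof -
    have "6 * real n \<le> 12 * real k + 48" using k2 by linarith
    then have "2 * real n * (3 / (real k + 4)) \<le> 12" by (simp add: field_simps)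
    moreover have "2 * real n * (real (card B) / 2 ^ n) \<le> 2 * real n * (3 / (real k + 4))"
      using far by (intro mult_left_mono) auto
    ultimately show ?thesis
      using avgStretch_le_card_far[of n \<phi> B, OF n1 into B close] C' by linarith
  qed
  ultimately show ?thesis
    unfolding has_good_mapping_def using \<phi> avgStretch_inv_into_involution[of n \<phi>, OF into invol]
    by (intro exI[of _ \<phi>]) auto
qed

lemma ex_large_dim_bound:
  "\<exists>N. \<forall>n\<ge>N. real n * ln 2 + ln 2 * 2 powr (real n / 8) \<le> 2 powr ((real n - 2) / 2) / (real n / 2 + 4)"
proof -
  have "eventually (\<lambda>x::real. x * ln 2 + ln 2 * 2 powr (x / 8) \<le> 2 powr ((x - 2) / 2) / (x / 2 + 4)) at_top"
    by real_asymp
  then have "eventually (\<lambda>n. real n * ln 2 + ln 2 * 2 powr (real n / 8)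
      \<le> 2 powr ((real n - 2) / 2) / (real n / 2 + 4)) sequentially"
    by (rule eventually_compose_filterlim[OF _ filterlim_real_sequentially])
  then show ?thesis unfolding eventually_sequentially by blast
qed

lemma prob_has_good_mapping_large_dim:
  assumes n1: "n \<ge> 1"
    and large: "real n * ln 2 + ln 2 * 2 powr (real n / 8) \<le> 2 powr ((real n - 2) / 2) / (real n / 2 + 4)"
    and C: "6 \<le> C" and C': "17 \<le> C'"
  shows "unif_prob (balanced_funs n) (has_good_mapping n C C') \<ge> 1 - 2 powr (- (2 powr (1/8 * real n)))"
proof -
  define k where "k = n div 2"
  have kn: "k < n" and k2: "real n \<le> 2 * real k + 1" "2 * real k \<le> real n"
    using n1 unfolding k_def by simp_all
  define Many where "Many = {f \<in> balanced_funs n. 3 * 2 ^ (n - 1) / (real k + 4) \<le> real (card (unmatched n k f 1))}"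
  define L where "L = 2 powr ((real n - 2) / 2) / (real n / 2 + 4)"
  have "1 - real (card Many) / real (card (balanced_funs n)) \<le> unif_prob (balanced_funs n) (has_good_mapping n C C')"
    using has_good_mapping_if_few_unmatched[OF n1 _ _ C C'] unfolding Many_def k_def
    by (intro unif_prob_ge_one_minus_card card_balanced_funs_pos[OF n1]) (auto simp: not_le)
  moreover have "real (card Many) / real (card (balanced_funs n)) \<le> 2 ^ n * exp (- L)"
  proof -
    have "2 powr ((real n - 2) / 2) \<le> 2 powr (real (n - 1) - real k)"
      using k2 n1 by (intro powr_mono) (auto simp: of_nat_diff)
    also have "\<dots> = 2 ^ (n - 1) / 2 ^ k" by (simp add: powr_diff powr_realpow)
    finally have "L \<le> 2 ^ (n - 1) / 2 ^ k / (real k + 4)"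
      unfolding L_def using k2 by (intro frac_le) auto
    then have "real (card Many) \<le> 2 ^ (2 ^ n) * exp (- L)"
      using card_many_unmatched_le[OF n1 kn] unfolding Many_def by (smt (verit) exp_le_cancel_iff mult_left_mono zero_le_power)
    then have "real (card Many) / real (card (balanced_funs n)) \<le> 2 ^ (2 ^ n) * exp (- L) / (2 ^ (2 ^ n) / 2 ^ n)"
      using card_balanced_funs_ge[OF n1] by (intro frac_le) auto
    then show ?thesis by (simp add: mult.commute)
  qed
  moreover have "2 ^ n * exp (- L) \<le> 2 powr (- (2 powr (1/8 * real n)))"
  proof -
    have "2 ^ n * exp (- L) = exp (real n * ln 2 - L)"
      using powr_realpow[of 2 n] by (simp add: powr_def exp_diff exp_minus field_simps)
    also have "\<dots> \<le> exp (- (ln 2 * 2 powr (real n / 8)))" using large unfolding L_def by simp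
    also have "\<dots> = 2 powr (- (2 powr (1/8 * real n)))" by (simp add: powr_def mult.commute)
    finally show ?thesis .
  qed
  ultimately show ?thesis by linarith
qed

theorem theorem4:
  "\<exists>c::real. c > 0 \<and> (\<exists>C::real. \<exists>C'::real. \<forall>n::nat. n \<ge> 1 \<longrightarrow>
     unif_prob (balanced_funs n)
       (\<lambda>f. \<exists>\<phi>. is_mapping n dictator f \<phi>
               \<and> unif_prob (cube n) (\<lambda>x. hdist x (\<phi> x) \<le> 2) \<ge> 1 - C / real n
               \<and> avgStretch n \<phi> \<le> C'
               \<and> avgStretch n (inv_into (cube n) \<phi>) \<le> C')
     \<ge> 1 - 2 powr (- (2 powr (c * real n))))"
proof -
  obtain N where N: "\<And>n. n \<ge> N \<Longrightarrow>
      real n * ln 2 + ln 2 * 2 powr (real n / 8) \<le> 2 powr ((real n - 2) / 2) / (real n / 2 + 4)"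
    using ex_large_dim_bound by blast
  define C where "C = real N + 6"
  define C' where "C' = real N + 17"
  have "unif_prob (balanced_funs n) (has_good_mapping n C C') \<ge> 1 - 2 powr (- (2 powr (1/8 * real n)))"
    if n1: "n \<ge> 1" for n
  proof (cases "n \<ge> N")
    case True
    then show ?thesis using prob_has_good_mapping_large_dim[OF n1 N] by (simp add: C_def C'_def)
  next
    case False
    then have "{f \<in> balanced_funs n. has_good_mapping n C C' f} = balanced_funs n"
      using has_good_mapping_if_small_dim[OF n1] by (auto simp: C_def C'_def)
    then show ?thesis using card_balanced_funs_pos[OF n1] unfolding unif_prob_def by simp
  qed
  then show ?thesis unfolding has_good_mapping_def by (intro exI[of _ "1/8"] conjI exI) auto
qed

end
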